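(* Let $n\in\mathbb{N}$, $n\ge1$, and $\Delta,\Delta'\in\mathcal{P}_n$. Then $f^{(\Delta)}_{32,n}\neq f^{(\Delta')}_{32,n}$ if and only if there exists $i\in\mathbb{Z}_n$ such that one of the following holds: (1) $lab_\Delta((i+1,i))=lab_\Delta((i-1,i))=\oplus$ and ($lab_{\Delta'}((i+1,i))=\ominus$ or $lab_{\Delta'}((i-1,i))=\ominus$); (2) $lab_{\Delta'}((i+1,i))=lab_{\Delta'}((i-1,i))=\oplus$ and ($lab_\Delta((i+1,i))=\ominus$ or $lab_\Delta((i-1,i))=\ominus$).
   Context: Cells are indexed by $\mathbb{Z}_n=\{0,\dots,n-1\}$, indices modulo $n$. Rule $32$ has local rule $r_{32}(x_1,x_2,x_3)=x_1\wedge\neg x_2\wedge x_3$ and global function $f_{32,n}(x)_i=r_{32}(x_{i-1},x_i,x_{i+1})$. An update schedule is an ordered partition $\Delta=(\Delta_1,\dots,\Delta_k)$ of $\mathbb{Z}_n$ into nonempty blocks; $\mathcal{P}_n$ is the set of them. For a block $B$ let $f^{(B)}(x)_i=f_{32,n}(x)_i$ if $i\in B$ and $x_i$ otherwise; $f^{(\Delta)}_{32,n}=f^{(\Delta_k)}\circ\cdots\circ f^{(\Delta_1)}$. (The paper phrases the conclusion as inequality of the transition digraphs with arcs $(x,f^{(\Delta)}_{32,n}(x))$, which is equivalent to inequality of the maps.) For $u,v\in\mathbb{Z}_n$ with $u\in\Delta_a$, $v\in\Delta_b$, $lab_\Delta((u,v))=\oplus$ if $b\le a$ and $\ominus$ if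 $a<b$. *)

theory Defs
  imports Main
begin

definition configs :: "nat \<Rightarrow> (nat \<Rightarrow> bool) set" where
  "configs n = {x. \<forall>i\<ge>n. \<not> x i}"

definition r32 :: "bool \<Rightarrow> bool \<Rightarrow> bool \<Rightarrow> bool" where
  "r32 a b c = (a \<and> \<not> b \<and> c)"

definition f32 :: "nat \<Rightarrow> (nat \<Rightarrow> bool) \<Rightarrow> nat \<Rightarrow> bool" where
  "f32 n x i = r32 (x ((i + n - 1) mod n)) (x i) (x ((i + 1) mod n))"

definition block_upd :: "nat \<Rightarrow> nat set \<Rightarrow> (nat \<Rightarrow> bool) \<Rightarrow> (nat \<Rightarrow> bool)" where
  "block_upd n B x = (\<lambda>i. if i \<in> B then f32 n x i else x i)"

definition sched32 :: "nat \<Rightarrow> nat set list \<Rightarrow> (nat \<Rightarrow> bool) \<Rightarrow> (nat \<Rightarrow> bool)" where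
  "sched32 n D x = fold (block_upd n) D x"

definition is_schedule :: "nat \<Rightarrow> nat set list \<Rightarrow> bool" where
  "is_schedule n D \<longleftrightarrow>
     (\<forall>a<length D. D ! a \<noteq> {}) \<and>
     (\<forall>a<length D. \<forall>b<length D. a \<noteq> b \<longrightarrow> D ! a \<inter> D ! b = {}) \<and>
     \<Union> (set D) = {0..<n}"

definition blk :: "nat set list \<Rightarrow> nat \<Rightarrow> nat" where
  "blk D u = (THE a. a < length D \<and> u \<in> D ! a)"

datatype label = Plus | Minus

definition lab :: "nat set list \<Rightarrow> nat \<Rightarrow> nat \<Rightarrow> label" where
  "lab D u v = (if blk D v \<le> blk D u then Plus else Minus)"

end

theory Submission
  imports Defs
begin

text \<open>Rule 32 switches a cell on only if it is 0 and both neighbours are 1. A neighbour that was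
  updated earlier in the schedule is therefore either 0 or has just switched on, which needs the cell
  itself to be 1; in both cases the cell ends at 0. So a block-sequential schedule sends \<open>x\<close> to the
  configuration that equals \<open>f\<^sub>32(x)\<^sub>i\<close> at the cells \<open>i\<close> whose two in-arcs are labelled \<open>\<oplus>\<close> and is 0
  elsewhere. Two schedules thus differ exactly when they disagree on this set of cells; a cell of
  disagreement is witnessed by the configuration with a single 0 at that cell (such a cell exists only
  for \<open>n \<ge> 2\<close>: on a ring of one cell both in-arcs are loops, labelled \<open>\<oplus>\<close> by every schedule).\<close>

lemma blk_eqI:
  assumes "is_schedule n D" "a < length D" "j \<in> D ! a"
  shows "blk D j = a"
  unfolding blk_def
proof (rule the_equality)
  show "a < length D \<and> j \<in> D ! a" using assms by simp
  fix b assume "b < length D \<and> j \<in> D ! b"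
  then show "b = a" using assms unfolding is_schedule_def by blast
qed

lemma blk_in_schedule:
  assumes "is_schedule n D" "j < n"
  shows "blk D j < length D" "j \<in> D ! blk D j"
proof -
  have "j \<in> \<Union> (set D)" using assms unfolding is_schedule_def by auto
  then obtain a where "a < length D" "j \<in> D ! a" by (auto simp: in_set_conv_nth)
  then show "blk D j < length D" "j \<in> D ! blk D j" using blk_eqI[OF assms(1)] by simp_all
qed

lemma schedule_block_less:
  assumes "is_schedule n D" "a < length D" "j \<in> D ! a"
  shows "j < n"
  using assms unfolding is_schedule_def by (auto dest!: nth_mem)

lemma lab_self: "lab D i i = Plus"
  by (simp add: lab_def)

lemma succ_of_pred_mod:
  assumes "j < (n::nat)"
  shows "((j + n - 1) mod n + 1) mod n = j"
proof (cases j)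
  case 0
  then show ?thesis using assms by (simp add: Suc_leI)
next
  case (Suc i)
  then have "(j + n - 1) mod n = i" using assms by (simp add: mod_if)
  then show ?thesis using Suc assms by simp
qed

lemma pred_of_succ_mod:
  assumes "j < (n::nat)"
  shows "((j + 1) mod n + n - 1) mod n = j"
  using assms by (cases "j + 1 = n") simp_all

lemma f32_pred_imp: "j < n \<Longrightarrow> f32 n x ((j + n - 1) mod n) \<Longrightarrow> x j"
  using succ_of_pred_mod[of j n] by (simp add: f32_def r32_def)

lemma f32_succ_imp: "j < n \<Longrightarrow> f32 n x ((j + 1) mod n) \<Longrightarrow> x j"
  using pred_of_succ_mod[of j n] by (simp add: f32_def r32_def)

definition in_arcs_plus :: "nat \<Rightarrow> nat set list \<Rightarrow> nat \<Rightarrow> bool" where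
  "in_arcs_plus n D i \<longleftrightarrow> lab D ((i + 1) mod n) i = Plus \<and> lab D ((i + n - 1) mod n) i = Plus"

lemma f32_at_block:
  assumes S: "is_schedule n D" and k: "k < length D" "j \<in> D ! k"
    and y: "\<And>i. y i = (if i < n \<and> blk D i < k then in_arcs_plus n D i \<and> f32 n x i else x i)"
  shows "f32 n y j \<longleftrightarrow> in_arcs_plus n D j \<and> f32 n x j"
proof -
  define l r where "l = (j + n - 1) mod n" and "r = (j + 1) mod n"
  have jn: "j < n" using schedule_block_less[OF S k] .
  have bj: "blk D j = k" using blk_eqI[OF S k] .
  have lr_n: "l < n" "r < n" using jn by (simp_all add: l_def r_def)
  have yj: "y j = x j" using y[of j] bj by simp
  have f32_y: "f32 n y j = r32 (y l) (x j) (y r)"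
    by (simp add: f32_def l_def r_def yj)
  have in_arcs: "in_arcs_plus n D j \<longleftrightarrow> \<not> blk D l < k \<and> \<not> blk D r < k"
    by (auto simp: in_arcs_plus_def lab_def bj l_def r_def)
  show ?thesis
  proof (cases "blk D l < k \<or> blk D r < k")
    case True
    \<comment> \<open>an earlier-updated neighbour that is now 1 has fired, which forces \<open>x j\<close>\<close>
    have "blk D l < k \<Longrightarrow> y l \<Longrightarrow> x j" "blk D r < k \<Longrightarrow> y r \<Longrightarrow> x j"
      using y[of l] y[of r] lr_n f32_pred_imp[OF jn] f32_succ_imp[OF jn]
      by (auto simp: l_def r_def)
    then show ?thesis using True f32_y in_arcs by (auto simp: r32_def)
  next
    case False
    then have "y l = x l" "y r = x r" using y[of l] y[of r] by auto
    then show ?thesis using False f32_y in_arcs by (simp add: f32_def l_def r_def)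
  qed
qed

lemma fold_block_upd_take:
  assumes S: "is_schedule n D" and "k \<le> length D"
  shows "fold (block_upd n) (take k D) x j =
    (if j < n \<and> blk D j < k then in_arcs_plus n D j \<and> f32 n x j else x j)"
  using assms(2)
proof (induction k arbitrary: j)
  case 0
  then show ?case by simp
next
  case (Suc k)
  let ?y = "fold (block_upd n) (take k D) x"
  have k: "k < length D" using Suc.prems by simp
  have step: "fold (block_upd n) (take (Suc k) D) x j = (if j \<in> D ! k then f32 n ?y j else ?y j)"
    using k by (simp add: take_Suc_conv_app_nth block_upd_def)
  show ?case
  proof (cases "j \<in> D ! k")
    case True
    then show ?thesis
      using f32_at_block[OF S k True Suc.IH] Suc.prems step
        schedule_block_less[OF S k True] blk_eqI[OF S k True]
      by simp
  next
    case False
    then have "j < n \<and> blk D j < Suc k \<longleftrightarrow> j < n \<and> blk D j < k"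
      using blk_in_schedule(2)[OF S] by (auto simp: less_Suc_eq)
    then show ?thesis using False Suc step by simp
  qed
qed

lemma sched32_eq:
  assumes "is_schedule n D"
  shows "sched32 n D x j = (if j < n then in_arcs_plus n D j \<and> f32 n x j else x j)"
  using fold_block_upd_take[OF assms order_refl, of x j] blk_in_schedule[OF assms]
  by (auto simp: sched32_def)

lemma in_arcs_plus_ring_of_one: "in_arcs_plus 1 D 0"
  by (simp add: in_arcs_plus_def lab_self)

lemma f32_single_zero:
  assumes "1 < n" "i < n"
  shows "f32 n (\<lambda>j. j \<noteq> i \<and> j < n) i"
proof -
  have "(i + 1) mod n \<noteq> i" using assms by (cases "i + 1 = n") auto
  moreover have "(i + n - 1) mod n \<noteq> i"
  proof (cases i)
    case (Suc m)
    then have "(i + n - 1) mod n = m" using assms by (simp add: mod_if)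
    then show ?thesis using Suc by simp
  qed (use assms in simp)
  ultimately show ?thesis using assms by (simp add: f32_def r32_def)
qed

lemma sched32_differ_iff:
  assumes S: "is_schedule n D" and S': "is_schedule n D'"
  shows "(\<exists>x\<in>configs n. sched32 n D x \<noteq> sched32 n D' x) \<longleftrightarrow>
    (\<exists>i<n. in_arcs_plus n D i \<noteq> in_arcs_plus n D' i)"
proof
  assume "\<exists>x\<in>configs n. sched32 n D x \<noteq> sched32 n D' x"
  then obtain x j where "sched32 n D x j \<noteq> sched32 n D' x j" by blast
  then show "\<exists>i<n. in_arcs_plus n D i \<noteq> in_arcs_plus n D' i"
    by (auto simp: sched32_eq[OF S] sched32_eq[OF S'] split: if_splits)
next
  assume "\<exists>i<n. in_arcs_plus n D i \<noteq> in_arcs_plus n D' i"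
  then obtain i where i: "i < n" and differ: "in_arcs_plus n D i \<noteq> in_arcs_plus n D' i" by blast
  have "n \<noteq> 1" using i differ in_arcs_plus_ring_of_one by fastforce
  then have "1 < n" using i by simp
  define x where "x = (\<lambda>j. j \<noteq> i \<and> j < n)"
  have "x \<in> configs n" by (simp add: x_def configs_def)
  moreover have "sched32 n D x i \<noteq> sched32 n D' x i"
    using differ f32_single_zero[OF \<open>1 < n\<close> i] i
    by (simp add: sched32_eq[OF S] sched32_eq[OF S'] x_def)
  ultimately show "\<exists>x\<in>configs n. sched32 n D x \<noteq> sched32 n D' x" by metis
qed

theorem mainTheorem13:
  fixes n :: nat and D D' :: "nat set list"
  assumes "n \<ge> 1" and "is_schedule n D" and "is_schedule n D'"
  shows "(\<exists>x\<in>configs n. sched32 n D x \<noteq> sched32 n D' x) \<longleftrightarrow>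
    (\<exists>i<n.
      (lab D ((i + 1) mod n) i = Plus \<and> lab D ((i + n - 1) mod n) i = Plus \<and>
        (lab D' ((i + 1) mod n) i = Minus \<or> lab D' ((i + n - 1) mod n) i = Minus)) \<or>
      (lab D' ((i + 1) mod n) i = Plus \<and> lab D' ((i + n - 1) mod n) i = Plus \<and>
        (lab D ((i + 1) mod n) i = Minus \<or> lab D ((i + n - 1) mod n) i = Minus)))"
proof -
  have minus_iff: "\<And>l. l = Minus \<longleftrightarrow> l \<noteq> Plus"
    by (metis label.exhaust label.distinct(1))
  show ?thesis
    unfolding sched32_differ_iff[OF assms(2,3)] in_arcs_plus_def minus_iff by blast
qed

end
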